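(* Let $n\ge3$ and let $\rho:\mathsf{Ch}_n\to\mathcal M_N(\mathbb T)$ be a faithful representation. For $\ell\in\{1,\dots,n\}$ let $\rho_\ell:\mathsf{Ch}_{n+1}\to\mathcal M_N(\mathbb T)$ be the representation determined by $\rho_\ell(a_j)=\rho(a_j)$ for $j\le\ell$ and $\rho_\ell(a_j)=\rho(a_{j-1})$ for $j>\ell$. Then the representation $$\widetilde\rho=(\rho_1,\rho_2,\rho_n):\mathsf{Ch}_{n+1}\to(\mathcal M_N(\mathbb T))^3,\qquad x\mapsto(\rho_1(x),\rho_2(x),\rho_n(x)),$$ is faithful. Moreover, if the map $\mathbf k\mapsto\rho(\mathfrak C_{\mathbf k}(a_1,\dots,a_n))$ (defined on tuples $\mathbf k=(k_{ji})_{1\le i\le j\le n}$ of non-negative integers) is the restriction of an injective affine map, then the map $\widetilde{\mathbf k}\mapsto\widetilde\rho(\mathfrak C_{\widetilde{\mathbf k}}(a_1,\dots,a_{n+1}))$ (defined on tuples $\widetilde{\mathbf k}=(\widetilde k_{ji})_{1\le i\le j\le n+1}$ of non-negative integers) is also the restriction of an injective affine map.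
   Context: The Chinese monoid of rank $m$ is $\mathsf{Ch}_m=\langle a_1,\dots,a_m\rangle$ with relations $a_ja_ka_i=a_ka_ja_i=a_ka_ia_j$ for all $1\le i\le j\le k\le m$. $\mathbb T=\mathbb R\cup\{-\infty\}$ is the max-plus semiring, $\mathcal M_N(\mathbb T)$ the monoid of $N\times N$ matrices over it; a representation is a monoid homomorphism into $\mathcal M_N(\mathbb T)$ (or into a product of such), faithful if injective. For a tuple $\mathbf k=(k_{ji})_{1\le i\le j\le m}$ of non-negative integers, $\mathfrak C_{\mathbf k}(a_1,\dots,a_m)=b_1\cdots b_m$ with $b_j=(a_ja_1)^{k_{j1}}\cdots(a_ja_{j-1})^{k_{j(j-1)}}a_j^{k_{jj}}$; every element of $\mathsf{Ch}_m$ equals $\mathfrak C_{\mathbf k}(a_1,\dots,a_m)$ for a unique $\mathbf k$. "Restriction of an injective affine map" means that the matrix (tuple) entries, viewed as a real vector, are given by an injective affine function of the tuple $\mathbf k\in\mathbb R^{m(m+1)/2}$, restricted to non-negative integer tuples. *)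

theory Defs
  imports Complex_Main
begin

datatype trop = NegInf | Fin real

fun tplus :: "trop \<Rightarrow> trop \<Rightarrow> trop" where
  "tplus NegInf y = y"
| "tplus x NegInf = x"
| "tplus (Fin a) (Fin b) = Fin (max a b)"

fun tmult :: "trop \<Rightarrow> trop \<Rightarrow> trop" where
  "tmult NegInf y = NegInf"
| "tmult x NegInf = NegInf"
| "tmult (Fin a) (Fin b) = Fin (a + b)"

definition tsum :: "('a \<Rightarrow> trop) \<Rightarrow> 'a set \<Rightarrow> trop" where
  "tsum f S = (if \<exists>x\<in>S. f x \<noteq> NegInf
               then Fin (Max {a. \<exists>x\<in>S. f x = Fin a}) else NegInf)"

section \<open>N x N matrices over T, indexed by a finite type 'n (N = CARD('n))\<close>

type_synonym 'n tmat = "'n \<Rightarrow> 'n \<Rightarrow> trop"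

definition tmat_mult :: "('n::finite) tmat \<Rightarrow> 'n tmat \<Rightarrow> 'n tmat" where
  "tmat_mult A B = (\<lambda>i j. tsum (\<lambda>k. tmult (A i k) (B k j)) UNIV)"

definition tmat_one :: "('n::finite) tmat" where
  "tmat_one = (\<lambda>i j. if i = j then Fin 0 else NegInf)"

definition meval :: "(nat \<Rightarrow> ('n::finite) tmat) \<Rightarrow> nat list \<Rightarrow> 'n tmat" where
  "meval g w = foldr (\<lambda>a M. tmat_mult (g a) M) w tmat_one"

section \<open>The Chinese monoid Ch_m, as words over {1..m} modulo a congruence\<close>

definition words :: "nat \<Rightarrow> nat list set" where
  "words m = {w. set w \<subseteq> {1..m}}"

definition ch_rel :: "nat \<Rightarrow> nat list \<Rightarrow> nat list \<Rightarrow> bool" where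
  "ch_rel m u v \<longleftrightarrow> (\<exists>i j k. 1 \<le> i \<and> i \<le> j \<and> j \<le> k \<and> k \<le> m \<and>
      ((u = [j,k,i] \<and> v = [k,j,i]) \<or> (u = [k,j,i] \<and> v = [k,i,j])))"

definition ch_step :: "nat \<Rightarrow> nat list \<Rightarrow> nat list \<Rightarrow> bool" where
  "ch_step m s t \<longleftrightarrow> (\<exists>x y u v. (ch_rel m u v \<or> ch_rel m v u) \<and>
      s = x @ u @ y \<and> t = x @ v @ y)"

definition ch_eq :: "nat \<Rightarrow> nat list \<Rightarrow> nat list \<Rightarrow> bool" where
  "ch_eq m = (ch_step m)\<^sup>*\<^sup>*"

text \<open>A map E on words defines a representation of Ch_m if it is constant on
  congruence classes (for E a word-homomorphism, such as meval g or a tuple of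
  these, this is exactly a monoid homomorphism from Ch_m); it is faithful if
  moreover the induced map on Ch_m is injective.\<close>
definition faithful_map :: "nat \<Rightarrow> (nat list \<Rightarrow> 'b) \<Rightarrow> bool" where
  "faithful_map m E \<longleftrightarrow>
     (\<forall>u\<in>words m. \<forall>v\<in>words m. ch_eq m u v \<longleftrightarrow> E u = E v)"

definition gen_shift :: "(nat \<Rightarrow> 'a) \<Rightarrow> nat \<Rightarrow> nat \<Rightarrow> 'a" where
  "gen_shift g l j = (if j \<le> l then g j else g (j - 1))"

definition tri :: "nat \<Rightarrow> (nat \<times> nat) set" where
  "tri m = {(j, i). 1 \<le> i \<and> i \<le> j \<and> j \<le> m}"

text \<open>b_j = (a_j a_1)^k_j1 ... (a_j a_(j-1))^k_j(j-1) a_j^k_jj; C_k = b_1 ... b_m.\<close>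
definition chword :: "nat \<Rightarrow> (nat \<times> nat \<Rightarrow> nat) \<Rightarrow> nat list" where
  "chword m k = concat (map (\<lambda>j.
       concat (map (\<lambda>i. concat (replicate (k (j, i)) [j, i])) [1..<j])
       @ replicate (k (j, j)) j) [1..<m+1])"

text \<open>phi (defined on tuples k indexed by tri m, with entries at positions P) is the
  restriction of an injective affine map: there is an affine map
  F(x) = c + L x on R^(tri m), injective, such that every entry at position p is
  F(k)_p, except for a set Z of positions whose entries are constantly -\<infinity>.\<close>
definition affine_inj_restr ::
    "nat \<Rightarrow> 'p set \<Rightarrow> ((nat \<times> nat \<Rightarrow> nat) \<Rightarrow> 'p \<Rightarrow> trop) \<Rightarrow> bool" where
  "affine_inj_restr m P phi \<longleftrightarrow>
     (\<exists>(c :: 'p \<Rightarrow> real) (L :: 'p \<Rightarrow> nat \<times> nat \<Rightarrow> real) Z. Z \<subseteq> P \<and>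
        (\<forall>x y :: nat \<times> nat \<Rightarrow> real.
            (\<forall>p\<in>P - Z. c p + (\<Sum>q\<in>tri m. L p q * x q) = c p + (\<Sum>q\<in>tri m. L p q * y q))
            \<longrightarrow> (\<forall>q\<in>tri m. x q = y q)) \<and>
        (\<forall>k. \<forall>p\<in>P. phi k p =
            (if p \<in> Z then NegInf else Fin (c p + (\<Sum>q\<in>tri m. L p q * real (k q))))))"

end

theory Submission
  imports Defs
begin

text \<open>Sending a_(l+1) to a_l and a_j to a_(j-1) for j > l + 1 defines a homomorphism
  Ch_(n+1) \<rightarrow> Ch_n, and rho_l is rho composed with it. Every element of Ch_m equals some
  C_k (append letters one at a time and push each into its block with the defining relations),
  and the collapse maps C_k to C_k' with k' a linear function of k. For l = 1, 2, n these
  three linear maps are jointly injective. By induction on n, starting from Ch_3 where an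
  automaton reads k off any word, the normal form is therefore unique; hence the three
  collapses separate the elements of Ch_(n+1), and precomposing an injective affine
  parametrisation of rho with the three linear maps gives one for the triple.\<close>

lemma ch_step_sym: "ch_step m s t \<Longrightarrow> ch_step m t s"
  unfolding ch_step_def by blast

lemma ch_step_imp_ch_eq: "ch_step m s t \<Longrightarrow> ch_eq m s t"
  unfolding ch_eq_def by (rule r_into_rtranclp)

lemma ch_eq_refl [simp]: "ch_eq m s s"
  by (simp add: ch_eq_def)

lemma ch_eq_sym: "ch_eq m s t \<Longrightarrow> ch_eq m t s"
  unfolding ch_eq_def by (metis ch_step_sym sympD symp_rtranclp sympI)

lemma ch_eq_trans [trans]: "ch_eq m s t \<Longrightarrow> ch_eq m t u \<Longrightarrow> ch_eq m s u"
  unfolding ch_eq_def by auto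

lemma ch_eq_map:
  assumes "\<And>s t. ch_step m s t \<Longrightarrow> ch_eq m' (F s) (F t)" and "ch_eq m s t"
  shows "ch_eq m' (F s) (F t)"
  using assms(2) unfolding ch_eq_def[of m]
proof (induction rule: rtranclp_induct)
  case (step t u)
  then show ?case using assms(1) ch_eq_trans by blast
qed simp

lemma ch_eq_append_context:
  assumes "ch_eq m s t" shows "ch_eq m (x @ s @ y) (x @ t @ y)"
proof (rule ch_eq_map[OF _ assms])
  fix s t assume "ch_step m s t"
  then have "ch_step m (x @ s @ y) (x @ t @ y)"
    unfolding ch_step_def by (metis append.assoc)
  then show "ch_eq m (x @ s @ y) (x @ t @ y)" by (rule ch_step_imp_ch_eq)
qed

lemma ch_eq_append: "ch_eq m a b \<Longrightarrow> ch_eq m c d \<Longrightarrow> ch_eq m (a @ c) (b @ d)"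
  using ch_eq_append_context[of m a b "[]" c] ch_eq_append_context[of m c d b "[]"]
  by (auto intro: ch_eq_trans)

lemma ch_rel_mono: "ch_rel m u v \<Longrightarrow> m \<le> m' \<Longrightarrow> ch_rel m' u v"
  unfolding ch_rel_def by (blast intro: le_trans)

lemma ch_eq_mono:
  assumes "ch_eq m s t" "m \<le> m'" shows "ch_eq m' s t"
proof (rule ch_eq_map[where F = id, simplified, OF _ assms(1)])
  fix s t assume "ch_step m s t"
  then have "ch_step m' s t"
    unfolding ch_step_def using ch_rel_mono[OF _ assms(2)] by blast
  then show "ch_eq m' s t" by (rule ch_step_imp_ch_eq)
qed

lemma ch_eq_rel: "ch_rel m u v \<Longrightarrow> ch_eq m u v"
  by (rule ch_step_imp_ch_eq, unfold ch_step_def) (metis append.left_neutral append_Nil2)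

lemma ch_eq_jki_kji: "1 \<le> i \<Longrightarrow> i \<le> j \<Longrightarrow> j \<le> k \<Longrightarrow> k \<le> m \<Longrightarrow> ch_eq m [j,k,i] [k,j,i]"
  by (rule ch_eq_rel) (auto simp: ch_rel_def)

lemma ch_eq_kji_kij: "1 \<le> i \<Longrightarrow> i \<le> j \<Longrightarrow> j \<le> k \<Longrightarrow> k \<le> m \<Longrightarrow> ch_eq m [k,j,i] [k,i,j]"
  by (rule ch_eq_rel) (auto simp: ch_rel_def)

definition ch_commute :: "nat \<Rightarrow> nat list \<Rightarrow> nat list \<Rightarrow> bool" where
  "ch_commute m u v \<longleftrightarrow> ch_eq m (u @ v) (v @ u)"

definition word_pow :: "nat \<Rightarrow> 'a list \<Rightarrow> 'a list" where
  "word_pow n w = concat (replicate n w)"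

lemma word_pow_0 [simp]: "word_pow 0 w = []"
  by (simp add: word_pow_def)

lemma word_pow_Suc: "word_pow (Suc n) w = w @ word_pow n w"
  by (simp add: word_pow_def)

lemma word_pow_Suc_right: "word_pow (Suc n) w = word_pow n w @ w"
  by (simp add: word_pow_def replicate_append_same[symmetric])

lemma word_pow_add: "word_pow (a + b) w = word_pow a w @ word_pow b w"
  by (simp add: word_pow_def replicate_add)

lemma word_pow_single: "word_pow n [a] = replicate n a"
  by (induction n) (auto simp: word_pow_Suc)

lemma word_pow_double: "word_pow n [a, a] = replicate (2 * n) a"
  by (induction n) (auto simp: word_pow_Suc)

lemma map_word_pow: "map f (word_pow n w) = word_pow n (map f w)"
  by (simp add: word_pow_def map_concat)

lemma ch_commute_sym: "ch_commute m u v \<Longrightarrow> ch_commute m v u"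
  by (simp add: ch_commute_def ch_eq_sym)

lemma ch_commute_Nil [simp]: "ch_commute m u []"
  by (simp add: ch_commute_def)

lemma ch_commute_append:
  assumes "ch_commute m u v" "ch_commute m u w" shows "ch_commute m u (v @ w)"
proof -
  have "ch_eq m (u @ v @ w) (v @ u @ w)"
    using ch_eq_append[OF assms(1)[unfolded ch_commute_def] ch_eq_refl] by simp
  also have "ch_eq m \<dots> (v @ w @ u)"
    using ch_eq_append[OF ch_eq_refl assms(2)[unfolded ch_commute_def]] by simp
  finally show ?thesis unfolding ch_commute_def by simp
qed

lemma ch_commute_word_pow: "ch_commute m u v \<Longrightarrow> ch_commute m u (word_pow n v)"
  by (induction n) (auto simp: word_pow_Suc intro: ch_commute_append)

lemma ch_commute_concat: "(\<And>v. v \<in> set vs \<Longrightarrow> ch_commute m u v) \<Longrightarrow> ch_commute m u (concat vs)"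
  by (induction vs) (auto intro: ch_commute_append)

lemma ch_commute_swap: "ch_commute m u v \<Longrightarrow> ch_eq m (x @ u @ v @ y) (x @ v @ u @ y)"
  unfolding ch_commute_def using ch_eq_append_context by (metis append.assoc)

lemma ch_commute_top_pair: "1 \<le> i \<Longrightarrow> i \<le> M \<Longrightarrow> M \<le> m \<Longrightarrow> ch_commute m [M] [M, i]"
  unfolding ch_commute_def using ch_eq_kji_kij[of i M M m] by simp

lemma ch_commute_pairs:
  assumes "1 \<le> h" "1 \<le> i" "h \<le> M" "i \<le> M" "M \<le> m"
  shows "ch_commute m [M, i] [M, h]"
proof -
  have ordered: "ch_commute m [M, b] [M, a]" if "1 \<le> a" "a \<le> b" "b \<le> M" for a b
  proof -
    have "ch_eq m ([M] @ [b, M, a] @ []) ([M] @ [M, b, a] @ [])"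
      using ch_eq_append_context[OF ch_eq_jki_kji[of a b M m]] that assms(5) by blast
    also have "ch_eq m \<dots> ([M] @ [M, a, b] @ [])"
      using ch_eq_append_context[OF ch_eq_kji_kij[of a b M m]] that assms(5) by blast
    also have "ch_eq m \<dots> ([] @ [M, a, M] @ [b])"
      using ch_eq_append_context[OF ch_eq_kji_kij[of a M M m], of "[]" "[b]"] that assms(5) by simp
    finally show ?thesis unfolding ch_commute_def by simp
  qed
  show ?thesis
    using ordered[of h i] ordered[of i h] assms by (cases "h \<le> i") (auto intro: ch_commute_sym)
qed

lemma ch_commute_letter_pair: "1 \<le> i \<Longrightarrow> i \<le> x \<Longrightarrow> x \<le> M \<Longrightarrow> M \<le> m \<Longrightarrow> ch_commute m [x] [M, i]"
  unfolding ch_commute_def using ch_eq_jki_kji[of i x M m] ch_eq_kji_kij[of i x M m]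
  by (auto intro: ch_eq_trans)

section \<open>Existence of normal forms\<close>

definition pair_word :: "nat \<Rightarrow> nat \<Rightarrow> (nat \<Rightarrow> nat) \<Rightarrow> nat list" where
  "pair_word M i c = concat (map (\<lambda>h. word_pow (c h) [M, h]) [1..<i])"

definition block :: "nat \<Rightarrow> (nat \<Rightarrow> nat) \<Rightarrow> nat \<Rightarrow> nat list" where
  "block M c d = pair_word M M c @ replicate d M"

lemma chword_block: "chword m k = concat (map (\<lambda>j. block j (\<lambda>i. k (j, i)) (k (j, j))) [1..<m+1])"
  by (simp add: chword_def block_def word_pow_def pair_word_def)

lemma chword_Suc: "chword (Suc m) k = chword m k @ block (Suc m) (\<lambda>i. k (Suc m, i)) (k (Suc m, Suc m))"
  by (simp add: chword_block)

lemma chword_cong: "(\<And>q. q \<in> tri m \<Longrightarrow> k q = k' q) \<Longrightarrow> chword m k = chword m k'"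
  unfolding chword_block block_def pair_word_def tri_def
  by (intro arg_cong[where f = concat] map_cong arg_cong2[where f = "(@)"]) auto

lemma chword_words: "chword m k \<in> words m"
  by (auto simp: words_def chword_def split: if_splits)

lemma pair_word_0 [simp]: "pair_word M 0 c = []"
  by (simp add: pair_word_def)

lemma pair_word_1 [simp]: "pair_word M (Suc 0) c = []"
  by (simp add: pair_word_def)

lemma pair_word_Suc: "1 \<le> i \<Longrightarrow> pair_word M (Suc i) c = pair_word M i c @ word_pow (c i) [M, i]"
  by (simp add: pair_word_def)

lemma pair_word_cong: "(\<And>h. 1 \<le> h \<Longrightarrow> h < i \<Longrightarrow> c h = c' h) \<Longrightarrow> pair_word M i c = pair_word M i c'"
  unfolding pair_word_def by (intro arg_cong[where f = concat] map_cong) auto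

lemma pair_word_upd: "i \<le> j \<Longrightarrow> pair_word M i (c(j := v)) = pair_word M i c"
  by (rule pair_word_cong) auto

lemma ch_commute_pair_word:
  "(\<And>h. 1 \<le> h \<Longrightarrow> h < i \<Longrightarrow> ch_commute m u [M, h]) \<Longrightarrow> ch_commute m u (pair_word M i c)"
  unfolding pair_word_def by (auto intro!: ch_commute_concat ch_commute_word_pow)

lemma pair_word_zero: "pair_word M i (\<lambda>_. 0) = []"
  by (simp add: pair_word_def)

lemma chword_zero: "chword m (\<lambda>_. 0) = []"
  by (simp add: chword_def)

lemma pair_word_Suc_upd:
  "1 \<le> i \<Longrightarrow> pair_word M i c @ word_pow v [M, i] = pair_word M (Suc i) (c(i := v))"
  by (simp add: pair_word_Suc pair_word_upd)

lemma pair_word_insert: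
  assumes "1 \<le> x" "x < i" "i \<le> M" "M \<le> m"
  shows "ch_eq m (pair_word M i c @ [M, x]) (pair_word M i (c(x := Suc (c x))))"
  using assms
proof (induction i)
  case (Suc i)
  then have i: "1 \<le> i" by simp
  show ?case
  proof (cases "x = i")
    case True
    have "pair_word M (Suc i) (c(i := Suc (c i))) = pair_word M (Suc i) c @ [M, i]"
      by (simp add: pair_word_Suc[OF i] pair_word_upd word_pow_Suc_right)
    then show ?thesis using True by (metis ch_eq_refl)
  next
    case False
    then have x: "x < i" using Suc.prems by simp
    have "ch_commute m (word_pow (c i) [M, i]) [M, x]"
      by (rule ch_commute_sym, rule ch_commute_word_pow, rule ch_commute_pairs) (use Suc.prems x in auto)
    from ch_commute_swap[OF this, of "pair_word M i c" "[]"]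
    have "ch_eq m (pair_word M (Suc i) c @ [M, x]) (pair_word M i c @ [M, x] @ word_pow (c i) [M, i])"
      by (simp add: pair_word_Suc[OF i])
    also have "ch_eq m \<dots> (pair_word M i (c(x := Suc (c x))) @ word_pow (c i) [M, i])"
      using ch_eq_append[OF Suc.IH ch_eq_refl] Suc.prems x by (simp add: fun_upd_def)
    also have "\<dots> = pair_word M (Suc i) (c(x := Suc (c x)))"
      using x by (simp add: pair_word_Suc[OF i])
    finally show ?thesis .
  qed
qed simp

lemma pair_word_merge:
  assumes "i \<le> M" "M \<le> m"
  shows "ch_eq m (pair_word M i c @ pair_word M i c') (pair_word M i (\<lambda>h. c h + c' h))"
  using assms
proof (induction i)
  case (Suc i)
  show ?case
  proof (cases "i = 0")
    case False
    then have i: "1 \<le> i" by simp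
    have "ch_commute m (word_pow (c i) [M, i]) (pair_word M i c')"
      by (rule ch_commute_pair_word, rule ch_commute_sym, rule ch_commute_word_pow, rule ch_commute_pairs)
        (use Suc.prems in auto)
    then have "ch_eq m (pair_word M (Suc i) c @ pair_word M (Suc i) c')
        (pair_word M i c @ pair_word M i c' @ word_pow (c i) [M, i] @ word_pow (c' i) [M, i])"
      using ch_commute_swap by (simp add: pair_word_Suc[OF i])
    also have "ch_eq m \<dots> (pair_word M i (\<lambda>h. c h + c' h) @ word_pow (c i) [M, i] @ word_pow (c' i) [M, i])"
      using ch_eq_append[OF Suc.IH ch_eq_refl] Suc.prems by simp
    finally show ?thesis by (simp add: pair_word_Suc[OF i] word_pow_add)
  qed simp
qed simp

lemma ch_eq_pair_letter: "1 \<le> x \<Longrightarrow> x \<le> i \<Longrightarrow> i \<le> M \<Longrightarrow> M \<le> m \<Longrightarrow> ch_eq m [M, i, x] [i, M, x]"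
  using ch_eq_jki_kji[of x i M m] by (auto intro: ch_eq_sym)

lemma pair_power_snoc_letter:
  assumes "1 \<le> x" "x < i" "i \<le> M" "M \<le> m"
  shows "ch_eq m (word_pow (Suc n) [M, i] @ [x]) ([i] @ [M, x] @ word_pow n [M, i])"
proof -
  have "word_pow (Suc n) [M, i] @ [x] = word_pow n [M, i] @ [M, i, x] @ []"
    by (simp add: word_pow_Suc_right)
  also have "ch_eq m \<dots> (word_pow n [M, i] @ [i, M, x] @ [])"
    using ch_eq_append_context[OF ch_eq_pair_letter] assms by simp
  also have "ch_eq m \<dots> ([i] @ word_pow n [M, i] @ [M, x] @ [])"
  proof -
    have "ch_commute m (word_pow n [M, i]) [i]"
      using assms by (auto intro!: ch_commute_sym[OF ch_commute_word_pow] ch_commute_letter_pair)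
    from ch_commute_swap[OF this, of "[]" "[M, x]"] show ?thesis by simp
  qed
  also have "ch_eq m \<dots> ([i] @ [M, x] @ word_pow n [M, i] @ [])"
    by (rule ch_commute_swap, rule ch_commute_sym, rule ch_commute_word_pow, rule ch_commute_pairs)
      (use assms in auto)
  finally show ?thesis by simp
qed

lemma pair_word_push_letter:
  assumes "1 \<le> x" "x < M" "i \<le> M" "M \<le> m"
  shows "\<exists>y c'. 1 \<le> y \<and> y < M \<and> ch_eq m (pair_word M i c @ [x]) ([y] @ pair_word M i c')"
  using assms
proof (induction i arbitrary: x c)
  case (Suc i)
  show ?case
  proof (cases "i = 0")
    case False
    then have i: "1 \<le> i" by simp
    show ?thesis
    proof (cases "i \<le> x \<or> c i = 0")
      case True
      have "ch_commute m (word_pow (c i) [M, i]) [x]"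
      proof (cases "c i = 0")
        case False
        then show ?thesis using True Suc.prems i
          by (auto intro!: ch_commute_sym[OF ch_commute_word_pow] ch_commute_letter_pair)
      qed (simp add: ch_commute_def)
      from ch_commute_swap[OF this, of "pair_word M i c" "[]"]
      have "ch_eq m (pair_word M (Suc i) c @ [x]) (pair_word M i c @ [x] @ word_pow (c i) [M, i])"
        by (simp add: pair_word_Suc[OF i])
      moreover obtain y c' where y: "1 \<le> y" "y < M" "ch_eq m (pair_word M i c @ [x]) ([y] @ pair_word M i c')"
        using Suc.IH[of x c] Suc.prems by auto
      ultimately have "ch_eq m (pair_word M (Suc i) c @ [x]) ([y] @ pair_word M i c' @ word_pow (c i) [M, i])"
        using ch_eq_append[OF y(3) ch_eq_refl] by (auto intro: ch_eq_trans)
      also have "\<dots> = [y] @ pair_word M (Suc i) (c'(i := c i))"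
        using pair_word_Suc_upd[OF i] by simp
      finally show ?thesis using y by blast
    next
      case False
      then obtain n where x: "x < i" and n: "c i = Suc n" by (cases "c i") auto
      obtain y c' where y: "1 \<le> y" "y < M" "ch_eq m (pair_word M i c @ [i]) ([y] @ pair_word M i c')"
        using Suc.IH[of i c] Suc.prems i by auto
      have "ch_eq m (pair_word M (Suc i) c @ [x]) (pair_word M i c @ [i] @ [M, x] @ word_pow n [M, i])"
        using ch_eq_append[OF ch_eq_refl pair_power_snoc_letter] Suc.prems i x n
        by (simp add: pair_word_Suc[OF i])
      also have "ch_eq m \<dots> ([y] @ pair_word M i c' @ [M, x] @ word_pow n [M, i])"
        using ch_eq_append[OF y(3) ch_eq_refl] by simp
      also have "ch_eq m \<dots> ([y] @ pair_word M i (c'(x := Suc (c' x))) @ word_pow n [M, i])"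
        using ch_eq_append_context[OF pair_word_insert[of x i M m c'], of "[y]" "word_pow n [M, i]"]
          Suc.prems x by simp
      also have "\<dots> = [y] @ pair_word M (Suc i) (c'(x := Suc (c' x), i := n))"
        using pair_word_Suc_upd[OF i] by simp
      finally show ?thesis using y by blast
    qed
  qed (use Suc.prems in auto)
qed auto

lemma block_snoc_top: "block M c d @ [M] = block M c (Suc d)"
  by (simp add: block_def replicate_append_same)

lemma block_snoc_letter:
  assumes "1 \<le> x" "x < M" "M \<le> m"
  shows "ch_eq m (block M c (Suc d) @ [x]) (block M (c(x := Suc (c x))) d)"
proof -
  have "block M c (Suc d) @ [x] = pair_word M M c @ replicate d M @ [M, x] @ []"
    by (simp add: block_def replicate_append_same[symmetric])
  also have "ch_eq m \<dots> (pair_word M M c @ [M, x] @ replicate d M @ [])"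
    by (rule ch_commute_swap, simp only: word_pow_single[symmetric], rule ch_commute_sym,
        rule ch_commute_word_pow, rule ch_commute_sym, rule ch_commute_top_pair) (use assms in auto)
  also have "ch_eq m \<dots> (block M (c(x := Suc (c x))) d)"
    using ch_eq_append[OF pair_word_insert ch_eq_refl] assms by (simp add: block_def)
  finally show ?thesis .
qed

lemma chword_extend: "\<exists>k. chword (Suc m) k = chword m k0 @ block (Suc m) c d"
proof -
  define k where "k = (\<lambda>(j, i). if j = Suc m then (if i = Suc m then d else c i) else k0 (j, i))"
  have "chword m k = chword m k0"
    by (rule chword_cong) (auto simp: k_def tri_def)
  moreover have "block (Suc m) (\<lambda>i. k (Suc m, i)) (k (Suc m, Suc m)) = block (Suc m) c d"
    unfolding block_def pair_word_def by (auto simp: k_def intro!: arg_cong[where f = concat] map_cong)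
  ultimately show ?thesis
    by (metis chword_Suc)
qed

lemma ch_eq_block_snoc:
  assumes normal_forms: "\<And>w. w \<in> words m \<Longrightarrow> \<exists>k. ch_eq m w (chword m k)"
    and x: "1 \<le> x" "x \<le> Suc m"
  shows "\<exists>k' c' d'. ch_eq (Suc m) (chword m k @ block (Suc m) c d @ [x]) (chword m k' @ block (Suc m) c' d')"
proof -
  define M where "M = Suc m"
  consider "x = M" | "x < M" "d \<noteq> 0" | "x < M" "d = 0" using x M_def by force
  then show ?thesis
  proof cases
    case 1
    then have "chword m k @ block M c d @ [x] = chword m k @ block M c (Suc d)"
      by (simp add: block_snoc_top)
    then show ?thesis unfolding M_def by (metis ch_eq_refl)
  next
    case 2
    then obtain d' where d': "d = Suc d'" by (cases d) auto
    have "ch_eq M (chword m k @ block M c d @ [x]) (chword m k @ block M (c(x := Suc (c x))) d')"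
      using ch_eq_append[OF ch_eq_refl block_snoc_letter[of x M M c d']] x 2 d' by simp
    then show ?thesis unfolding M_def by blast
  next
    case 3
    obtain y c' where y: "1 \<le> y" "y < M" "ch_eq M (block M c 0 @ [x]) ([y] @ block M c' 0)"
      using pair_word_push_letter[of x M M M c] x 3 unfolding block_def by auto
    have "chword m k @ [y] \<in> words m"
      using y chword_words[of m k] by (auto simp: words_def M_def)
    then obtain k' where "ch_eq m (chword m k @ [y]) (chword m k')"
      using normal_forms by blast
    then have k': "ch_eq M (chword m k @ [y]) (chword m k')"
      by (rule ch_eq_mono) (simp add: M_def)
    have "ch_eq M (chword m k @ block M c d @ [x]) (chword m k @ [y] @ block M c' 0)"
      using ch_eq_append[OF ch_eq_refl y(3)] 3 by simp
    also have "ch_eq M \<dots> (chword m k' @ block M c' 0)"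
      using ch_eq_append[OF k' ch_eq_refl] by simp
    finally show ?thesis unfolding M_def by blast
  qed
qed

lemma ch_eq_chword_exists: "w \<in> words m \<Longrightarrow> \<exists>k. ch_eq m w (chword m k)"
proof (induction m arbitrary: w)
  case 0
  then show ?case by (auto simp: words_def chword_def)
next
  case (Suc m)
  have "\<exists>k c d. ch_eq (Suc m) w (chword m k @ block (Suc m) c d)" if "w \<in> words (Suc m)" for w
    using that
  proof (induction w rule: rev_induct)
    case Nil
    show ?case
      by (rule exI[of _ "\<lambda>_. 0"], rule exI[of _ "\<lambda>_. 0"], rule exI[of _ 0])
        (simp add: chword_zero block_def pair_word_zero)
  next
    case (snoc x w)
    then have x: "1 \<le> x" "x \<le> Suc m" and "w \<in> words (Suc m)" by (auto simp: words_def)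
    then obtain k c d where "ch_eq (Suc m) w (chword m k @ block (Suc m) c d)"
      using snoc.IH by blast
    then have "ch_eq (Suc m) (w @ [x]) (chword m k @ block (Suc m) c d @ [x])"
      using ch_eq_append[OF _ ch_eq_refl, of "Suc m" w _ "[x]"]
      by (simp add: append_assoc[symmetric] del: append_assoc)
    with ch_eq_block_snoc[OF Suc.IH x, of k c d] show ?case
      by (meson ch_eq_trans)
  qed
  then obtain k c d where "ch_eq (Suc m) w (chword m k @ block (Suc m) c d)"
    using Suc.prems by blast
  moreover obtain k' where "chword (Suc m) k' = chword m k @ block (Suc m) c d"
    using chword_extend by blast
  ultimately have "ch_eq (Suc m) w (chword (Suc m) k')" by simp
  then show ?case by blast
qed

section \<open>Collapsing two adjacent generators\<close>

definition collapse :: "nat \<Rightarrow> nat \<Rightarrow> nat" where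
  "collapse l x = (if x \<le> l then x else x - 1)"

text \<open>Collapsing a_(l+1) onto a_l merges rows l and l+1 of the exponent tuple, where each
  a_(l+1) a_l becomes a_l a_l (hence the coefficient 2), and merges columns l and l+1 of all
  later rows.\<close>
definition collapse_exps :: "nat \<Rightarrow> (nat \<times> nat \<Rightarrow> 'a::comm_semiring_1) \<Rightarrow> nat \<times> nat \<Rightarrow> 'a" where
  "collapse_exps l k = (\<lambda>(j, i).
     if j < l then k (j, i)
     else if j = l then (if i < l then k (l, i) + k (l + 1, i)
                         else k (l, l) + 2 * k (l + 1, l) + k (l + 1, l + 1))
     else if i < l then k (j + 1, i)
     else if i = l then k (j + 1, l) + k (j + 1, l + 1)
     else k (j + 1, i + 1))"

lemma ch_eq_map_collapse:
  assumes "1 \<le> l" "l \<le> m" "ch_eq (Suc m) s t"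
  shows "ch_eq m (map (collapse l) s) (map (collapse l) t)"
proof (rule ch_eq_map[OF _ assms(3)])
  have rel: "ch_rel m (map (collapse l) u) (map (collapse l) v)" if uv: "ch_rel (Suc m) u v" for u v
  proof -
    obtain i j k where ijk: "1 \<le> i" "i \<le> j" "j \<le> k" "k \<le> Suc m"
      "(u = [j, k, i] \<and> v = [k, j, i]) \<or> (u = [k, j, i] \<and> v = [k, i, j])"
      using uv unfolding ch_rel_def by blast
    have "1 \<le> collapse l i" "collapse l i \<le> collapse l j" "collapse l j \<le> collapse l k"
      "collapse l k \<le> m"
      using ijk assms by (auto simp: collapse_def)
    then show ?thesis unfolding ch_rel_def using ijk(5) by fastforce
  qed
  fix s t assume "ch_step (Suc m) s t"
  then have "ch_step m (map (collapse l) s) (map (collapse l) t)"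
    unfolding ch_step_def using rel by fastforce
  then show "ch_eq m (map (collapse l) s) (map (collapse l) t)" by (rule ch_step_imp_ch_eq)
qed

lemma map_collapse_words: "1 \<le> l \<Longrightarrow> l \<le> m \<Longrightarrow> w \<in> words (Suc m) \<Longrightarrow> map (collapse l) w \<in> words m"
  by (auto simp: words_def collapse_def subset_iff)

lemma upt_split: "a \<le> b \<Longrightarrow> b \<le> c \<Longrightarrow> [a..<c] = [a..<b] @ [b..<c]"
  by (metis le_Suc_ex upt_add_eq_append)

lemma map_pair_word: "map f (pair_word M i c) = concat (map (\<lambda>h. word_pow (c h) [f M, f h]) [1..<i])"
  by (simp add: pair_word_def map_concat map_word_pow comp_def)

lemma set_block_subset: "set (block j c d) \<subseteq> {..j}"
  by (auto simp: block_def pair_word_def word_pow_def)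

lemma map_collapse_block_low: "j \<le> l \<Longrightarrow> map (collapse l) (block j c d) = block j c d"
  using set_block_subset[of j c d] by (intro map_idI) (auto simp: collapse_def)

lemma map_collapse_block_succ:
  "1 \<le> l \<Longrightarrow> map (collapse l) (block (Suc l) c d) = pair_word l l c @ word_pow (c l) [l, l] @ replicate d l"
proof -
  assume l: "1 \<le> l"
  have "map (collapse l) (pair_word (Suc l) l c) = pair_word l l c"
    unfolding map_pair_word unfolding pair_word_def
    by (intro arg_cong[where f = concat] map_cong) (auto simp: collapse_def)
  then show ?thesis using l by (simp add: block_def pair_word_Suc map_word_pow collapse_def)
qed

lemma map_collapse_block_high:
  assumes "1 \<le> l" "l + 2 \<le> j"
  shows "map (collapse l) (block j c d) =
    block (j - 1) (\<lambda>i. if i < l then c i else if i = l then c l + c (l + 1) else c (i + 1)) d"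
proof -
  define c' where "c' = (\<lambda>i. if i < l then c i else if i = l then c l + c (l + 1) else c (i + 1))"
  have j: "collapse l j = j - 1" using assms by (simp add: collapse_def)
  have split_j: "[1..<j] = [1..<l] @ [l, Suc l] @ map Suc [Suc l..<j - 1]"
    using assms upt_split[of 1 l j] by (simp add: upt_conv_Cons map_Suc_upt)
  have split_j': "[1..<j - 1] = [1..<l] @ [l] @ [Suc l..<j - 1]"
    using assms upt_split[of 1 l "j - 1"] by (simp add: upt_conv_Cons)
  have low: "map (\<lambda>h. word_pow (c h) [j - 1, collapse l h]) [1..<l]
      = map (\<lambda>h. word_pow (c' h) [j - 1, h]) [1..<l]"
    by (rule map_cong) (auto simp: collapse_def c'_def)
  have high: "map (\<lambda>h. word_pow (c h) [j - 1, collapse l h]) (map Suc [Suc l..<j - 1])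
      = map (\<lambda>h. word_pow (c' h) [j - 1, h]) [Suc l..<j - 1]"
    unfolding map_map by (rule map_cong) (auto simp: collapse_def c'_def)
  have mid: "word_pow (c l) [j - 1, collapse l l] @ word_pow (c (Suc l)) [j - 1, collapse l (Suc l)]
      = word_pow (c' l) [j - 1, l]"
    by (simp add: collapse_def c'_def word_pow_add)
  have "map (collapse l) (pair_word j j c) = pair_word (j - 1) (j - 1) c'"
    unfolding map_pair_word j unfolding pair_word_def split_j split_j'
    using low high mid by (simp only: map_append concat_append list.map concat.simps append_Nil2 append_assoc)
  then show ?thesis by (simp add: block_def c'_def j)
qed

lemma ch_eq_collapse_adjacent_blocks:
  assumes "1 \<le> l" "l \<le> m"
  shows "ch_eq m (map (collapse l) (block l c d @ block (Suc l) c' d'))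
                 (block l (\<lambda>i. c i + c' i) (d + 2 * c' l + d'))"
proof -
  have "map (collapse l) (block l c d @ block (Suc l) c' d') =
        pair_word l l c @ replicate d l @ pair_word l l c' @ word_pow (c' l) [l, l] @ replicate d' l"
    using assms by (simp add: map_collapse_block_low map_collapse_block_succ) (simp add: block_def)
  also have "ch_eq m \<dots> (pair_word l l c @ pair_word l l c' @ replicate d l @ word_pow (c' l) [l, l] @ replicate d' l)"
  proof -
    have "ch_commute m (word_pow d [l]) (pair_word l l c')"
      by (rule ch_commute_pair_word, rule ch_commute_sym, rule ch_commute_word_pow, rule ch_commute_sym,
          rule ch_commute_top_pair) (use assms in auto)
    from ch_commute_swap[OF this, of "pair_word l l c" "word_pow (c' l) [l, l] @ replicate d' l"]
    show ?thesis by (simp add: word_pow_single)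
  qed
  also have "ch_eq m \<dots> (pair_word l l (\<lambda>i. c i + c' i) @ replicate d l @ word_pow (c' l) [l, l] @ replicate d' l)"
    using ch_eq_append[OF pair_word_merge[of l l m c c'] ch_eq_refl] assms by simp
  also have "\<dots> = block l (\<lambda>i. c i + c' i) (d + 2 * c' l + d')"
    by (simp add: block_def word_pow_double replicate_add)
  finally show ?thesis .
qed

lemma map_collapse_chword_block:
  assumes "1 \<le> l" "l < j"
  shows "map (collapse l) (block (Suc j) (\<lambda>i. k (Suc j, i)) (k (Suc j, Suc j)))
    = block j (\<lambda>i. collapse_exps l k (j, i)) (collapse_exps l k (j, j))"
proof -
  have "l + 2 \<le> Suc j" using assms by simp
  then have "map (collapse l) (block (Suc j) (\<lambda>i. k (Suc j, i)) (k (Suc j, Suc j))) = block j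
      (\<lambda>i. if i < l then k (Suc j, i) else if i = l then k (Suc j, l) + k (Suc j, l + 1) else k (Suc j, i + 1))
      (k (Suc j, Suc j))"
    using map_collapse_block_high[OF assms(1)] by simp
  also have "\<dots> = block j (\<lambda>i. collapse_exps l k (j, i)) (collapse_exps l k (j, j))"
    unfolding block_def using assms
    by (intro arg_cong2[where f = "(@)"] pair_word_cong) (auto simp: collapse_exps_def)
  finally show ?thesis .
qed

lemma ch_eq_collapse_chword:
  assumes "1 \<le> l" "l \<le> m"
  shows "ch_eq m (map (collapse l) (chword (Suc m) k)) (chword m (collapse_exps l k))"
proof -
  define R where "R = (\<lambda>(k :: nat \<times> nat \<Rightarrow> nat) j. block j (\<lambda>i. k (j, i)) (k (j, j)))"
  have chword_R: "chword m k = concat (map (R k) [1..<m + 1])" for m k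
    by (simp add: chword_block R_def)
  have split_Suc_m: "[1..<Suc m + 1] = [1..<l] @ [l, Suc l] @ map Suc [Suc l..<m + 1]"
    using assms upt_split[of 1 l "Suc m + 1"] by (simp add: upt_conv_Cons map_Suc_upt)
  have split_m: "[1..<m + 1] = [1..<l] @ [l] @ [Suc l..<m + 1]"
    using assms upt_split[of 1 l "m + 1"] by (simp add: upt_conv_Cons)
  have low: "map (\<lambda>j. map (collapse l) (R k j)) [1..<l] = map (R (collapse_exps l k)) [1..<l]"
    by (rule map_cong) (auto simp: R_def map_collapse_block_low collapse_exps_def)
  have high: "map (\<lambda>j. map (collapse l) (R k j)) (map Suc [Suc l..<m + 1])
      = map (R (collapse_exps l k)) [Suc l..<m + 1]"
    unfolding map_map R_def
  proof (rule map_cong)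
    fix j assume "j \<in> set [Suc l..<m + 1]"
    then have "l < j" by auto
    then show "((\<lambda>j. map (collapse l) (block j (\<lambda>i. k (j, i)) (k (j, j)))) \<circ> Suc) j
        = block j (\<lambda>i. collapse_exps l k (j, i)) (collapse_exps l k (j, j))"
      using map_collapse_chword_block[OF assms(1)] by simp
  qed simp
  have mid: "R (collapse_exps l k) l
      = block l (\<lambda>i. k (l, i) + k (Suc l, i)) (k (l, l) + 2 * k (Suc l, l) + k (Suc l, Suc l))"
    unfolding R_def block_def
    by (intro arg_cong2[where f = "(@)"] pair_word_cong) (auto simp: collapse_exps_def)
  have adjacent: "ch_eq m (map (collapse l) (R k l @ R k (Suc l))) (R (collapse_exps l k) l)"
    using ch_eq_collapse_adjacent_blocks[OF assms, of "\<lambda>i. k (l, i)" "k (l, l)" "\<lambda>i. k (Suc l, i)"]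
    unfolding mid by (simp add: R_def)
  have "map (collapse l) (chword (Suc m) k) =
      concat (map (\<lambda>j. map (collapse l) (R k j)) [1..<l]) @ map (collapse l) (R k l @ R k (Suc l)) @
      concat (map (\<lambda>j. map (collapse l) (R k j)) (map Suc [Suc l..<m + 1]))"
    unfolding chword_R split_Suc_m by (simp add: map_concat comp_def)
  moreover have "chword m (collapse_exps l k) = concat (map (R (collapse_exps l k)) [1..<l]) @
      R (collapse_exps l k) l @ concat (map (R (collapse_exps l k)) [Suc l..<m + 1])"
    unfolding chword_R split_m by simp
  ultimately show ?thesis
    unfolding low high using ch_eq_append_context[OF adjacent] by simp
qed

section \<open>Uniqueness of normal forms\<close>

type_synonym exps3 = "nat \<times> nat \<times> nat \<times> nat \<times> nat \<times> nat"

text \<open>The state (k11, k21, k22, k31, k32, k33) after reading a word is the exponent tuple of its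
  normal form in Ch_3; the transitions are read off by appending a letter to a normal form.\<close>
fun read3 :: "exps3 \<Rightarrow> nat \<Rightarrow> exps3" where
  "read3 (a, b, c, d, e, f) x =
    (if x = 3 then (a, b, c, d, e, f + 1)
     else if 0 < f then (if x = 1 then (a, b, c, d + 1, e, f - 1) else (a, b, c, d, e + 1, f - 1))
     else if x = 2 then (a, b, c + 1, d, e, f)
     else if 0 < e then (a, b, c + 1, d + 1, e - 1, f)
     else if 0 < c then (a, b + 1, c - 1, d, e, f)
     else (a + 1, b, c, d, e, f))"

definition run3 :: "exps3 \<Rightarrow> nat list \<Rightarrow> exps3" where
  "run3 z w = foldl read3 z w"

lemma run3_append: "run3 z (u @ v) = run3 (run3 z u) v"
  by (simp add: run3_def)

lemma run3_ch_rel: "ch_rel 3 u v \<Longrightarrow> run3 z u = run3 z v"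
proof -
  assume "ch_rel 3 u v"
  then obtain i j k where ijk: "1 \<le> i" "i \<le> j" "j \<le> k" "k \<le> 3"
    and uv: "(u = [j, k, i] \<and> v = [k, j, i]) \<or> (u = [k, j, i] \<and> v = [k, i, j])"
    unfolding ch_rel_def by blast
  obtain a b c d e f where z: "z = (a, b, c, d, e, f)" by (cases z) auto
  have "(i = 1 \<or> i = 2 \<or> i = 3) \<and> (j = 1 \<or> j = 2 \<or> j = 3) \<and> (k = 1 \<or> k = 2 \<or> k = 3)"
    using ijk by auto
  then show ?thesis using ijk uv unfolding z run3_def
    by (elim conjE disjE) (auto split: if_splits)
qed

lemma run3_ch_eq: "ch_eq 3 s t \<Longrightarrow> run3 z s = run3 z t"
  unfolding ch_eq_def
proof (induction arbitrary: z rule: rtranclp_induct)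
  case (step t u)
  obtain x y p q where "ch_rel 3 p q \<or> ch_rel 3 q p" "t = x @ p @ y" "u = x @ q @ y"
    using step(2) unfolding ch_step_def by blast
  then have "run3 z t = run3 z u"
    using run3_ch_rel[of p q "run3 z x"] run3_ch_rel[of q p "run3 z x"] by (auto simp: run3_append)
  then show ?case using step by simp
qed simp

lemma chword_3: "chword 3 k = replicate (k (1, 1)) 1 @ word_pow (k (2, 1)) [2, 1] @ replicate (k (2, 2)) 2 @
    word_pow (k (3, 1)) [3, 1] @ word_pow (k (3, 2)) [3, 2] @ replicate (k (3, 3)) 3"
  by (simp add: chword_def word_pow_def eval_nat_numeral upt_rec)

lemma run3_chword: "run3 (0, 0, 0, 0, 0, 0) (chword 3 k) = (k (1, 1), k (2, 1), k (2, 2), k (3, 1), k (3, 2), k (3, 3))"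
proof -
  have "run3 (a, b, 0, d, 0, 0) (replicate n 1) = (a + n, b, 0, d, 0, 0)" for a b d n
    by (induction n arbitrary: a) (auto simp: run3_def)
  moreover have "run3 (a, b, 0, 0, 0, 0) (word_pow n [2, 1]) = (a, b + n, 0, 0, 0, 0)" for a b n
    by (induction n arbitrary: b) (auto simp: run3_def word_pow_Suc)
  moreover have "run3 (a, b, c, 0, 0, 0) (replicate n 2) = (a, b, c + n, 0, 0, 0)" for a b c n
    by (induction n arbitrary: c) (auto simp: run3_def)
  moreover have "run3 (a, b, c, d, 0, 0) (word_pow n [3, 1]) = (a, b, c, d + n, 0, 0)" for a b c d n
    by (induction n arbitrary: d) (auto simp: run3_def word_pow_Suc)
  moreover have "run3 (a, b, c, d, e, 0) (word_pow n [3, 2]) = (a, b, c, d, e + n, 0)" for a b c d e n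
    by (induction n arbitrary: e) (auto simp: run3_def word_pow_Suc)
  moreover have "run3 (a, b, c, d, e, f) (replicate n 3) = (a, b, c, d, e, f + n)" for a b c d e f n
    by (induction n arbitrary: f) (auto simp: run3_def)
  ultimately show ?thesis unfolding chword_3 run3_append by simp
qed

lemma chword_unique_3:
  assumes "ch_eq 3 (chword 3 k) (chword 3 k')" shows "\<forall>q\<in>tri 3. k q = k' q"
proof
  fix q assume "q \<in> tri 3"
  then have "q \<in> {(1, 1), (2, 1), (2, 2), (3, 1), (3, 2), (3, 3)}"
    by (auto simp: tri_def)
  moreover have "run3 (0, 0, 0, 0, 0, 0) (chword 3 k) = run3 (0, 0, 0, 0, 0, 0) (chword 3 k')"
    by (rule run3_ch_eq[OF assms])
  ultimately show "k q = k' q" unfolding run3_chword by auto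
qed

lemma collapse_exps_inj:
  fixes x y :: "nat \<times> nat \<Rightarrow> 'a::comm_semiring_1_cancel"
  assumes m: "3 \<le> m"
    and eq: "\<And>l q. l \<in> {1, 2, m} \<Longrightarrow> q \<in> tri m \<Longrightarrow> collapse_exps l x q = collapse_exps l y q"
  shows "\<forall>q\<in>tri (Suc m). x q = y q"
proof -
  have eq': "collapse_exps l x (j, i) = collapse_exps l y (j, i)"
    if "l \<in> {1, 2, m}" "1 \<le> i" "i \<le> j" "j \<le> m" for l j i
    using eq[of l "(j, i)"] that by (auto simp: tri_def)
  have rows_low: "x (j, i) = y (j, i)" if "j < m" "1 \<le> i" "i \<le> j" for j i
    using that eq'[of m i j] by (simp add: collapse_exps_def)
  have cols_high: "x (Suc j, Suc i) = y (Suc j, Suc i)" if "2 \<le> i" "i \<le> j" "j \<le> m" for j i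
    using that eq'[of 1 i j] by (simp add: collapse_exps_def)
  have col_1: "x (Suc j, 1) = y (Suc j, 1)" if "2 \<le> j" "j \<le> m" for j
  proof (cases "j = 2")
    case True
    then show ?thesis
      using m eq'[of 2 1 2] rows_low[of 2 1] by (simp add: collapse_exps_def)
  next
    case False
    then show ?thesis using that eq'[of 2 1 j] by (simp add: collapse_exps_def)
  qed
  have col_2: "x (Suc j, 2) = y (Suc j, 2)" if "2 \<le> j" "j \<le> m" for j
    using that col_1[OF that] eq'[of 1 1 j] by (simp add: collapse_exps_def numeral_2_eq_2)
  show ?thesis
  proof
    fix q assume "q \<in> tri (Suc m)"
    then obtain j i where q: "q = (j, i)" "1 \<le> i" "i \<le> j" "j \<le> Suc m" by (auto simp: tri_def)
    show "x q = y q"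
    proof (cases "j < m")
      case True
      then show ?thesis using rows_low q by simp
    next
      case False
      then obtain j' where j': "j = Suc j'" "2 \<le> j'" "j' \<le> m" using q m by (cases j) auto
      consider "i = 1" | "i = 2" | "3 \<le> i" using q(2) by linarith
      then show ?thesis
      proof cases
        case 3
        then show ?thesis using cols_high[of "i - 1" j'] j' q by simp
      qed (use col_1 col_2 j' q in auto)
    qed
  qed
qed

lemma chword_unique:
  "3 \<le> m \<Longrightarrow> ch_eq m (chword m k) (chword m k') \<Longrightarrow> \<forall>q\<in>tri m. k q = k' q"
proof (induction m arbitrary: k k' rule: nat_induct_at_least)
  case base
  then show ?case by (rule chword_unique_3)
next
  case (Suc m)
  show ?case
  proof (rule collapse_exps_inj[OF Suc.hyps(1)])
    fix l q assume l: "l \<in> {1, 2, m}" and q: "q \<in> tri m"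
    then have l_range: "1 \<le> l" "l \<le> m" using Suc.hyps(1) by auto
    have "ch_eq m (chword m (collapse_exps l k)) (chword m (collapse_exps l k'))"
      using ch_eq_map_collapse[OF l_range Suc.prems] ch_eq_collapse_chword[OF l_range]
      by (meson ch_eq_sym ch_eq_trans)
    then show "collapse_exps l k q = collapse_exps l k' q" using Suc.IH q by blast
  qed
qed

lemma ch_eq_iff_collapses:
  assumes n: "3 \<le> n" and u: "u \<in> words (Suc n)" and v: "v \<in> words (Suc n)"
  shows "ch_eq (Suc n) u v \<longleftrightarrow> (\<forall>l\<in>{1, 2, n}. ch_eq n (map (collapse l) u) (map (collapse l) v))"
proof
  assume "ch_eq (Suc n) u v"
  then show "\<forall>l\<in>{1, 2, n}. ch_eq n (map (collapse l) u) (map (collapse l) v)"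
    using ch_eq_map_collapse n by auto
next
  assume collapses: "\<forall>l\<in>{1, 2, n}. ch_eq n (map (collapse l) u) (map (collapse l) v)"
  obtain k k' where k: "ch_eq (Suc n) u (chword (Suc n) k)" and k': "ch_eq (Suc n) v (chword (Suc n) k')"
    using ch_eq_chword_exists u v by meson
  have "\<forall>q\<in>tri (Suc n). k q = k' q"
  proof (rule collapse_exps_inj[OF n])
    fix l q assume l: "l \<in> {1, 2, n}" and q: "q \<in> tri n"
    then have l_range: "1 \<le> l" "l \<le> n" using n by auto
    have "ch_eq n (chword n (collapse_exps l k)) (chword n (collapse_exps l k'))"
      using ch_eq_map_collapse[OF l_range k] ch_eq_map_collapse[OF l_range k'] collapses l
        ch_eq_collapse_chword[OF l_range] by (meson ch_eq_sym ch_eq_trans)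
    then show "collapse_exps l k q = collapse_exps l k' q"
      using chword_unique n q by blast
  qed
  then have "chword (Suc n) k = chword (Suc n) k'"
    by (intro chword_cong) blast
  then show "ch_eq (Suc n) u v" using k k' by (metis ch_eq_sym ch_eq_trans)
qed

lemma meval_map: "meval (\<lambda>j. g (f j)) w = meval g (map f w)"
  by (induction w) (simp_all add: meval_def)

lemma meval_gen_shift: "meval (gen_shift g l) w = meval g (map (collapse l) w)"
proof -
  have "gen_shift g l = (\<lambda>j. g (collapse l j))"
    by (auto simp: gen_shift_def collapse_def)
  then show ?thesis by (simp add: meval_map)
qed

lemma meval_gen_shift_eq_iff:
  assumes "faithful_map m (meval g)" "1 \<le> l" "l \<le> m" "u \<in> words (Suc m)" "v \<in> words (Suc m)"
  shows "meval (gen_shift g l) u = meval (gen_shift g l) v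
    \<longleftrightarrow> ch_eq m (map (collapse l) u) (map (collapse l) v)"
  using assms(1) map_collapse_words[OF assms(2,3,4)] map_collapse_words[OF assms(2,3,5)]
  unfolding faithful_map_def meval_gen_shift by blast

lemma meval_gen_shift_chword:
  assumes "faithful_map m (meval g)" "1 \<le> l" "l \<le> m"
  shows "meval (gen_shift g l) (chword (Suc m) k) = meval g (chword m (collapse_exps l k))"
  using assms(1) ch_eq_collapse_chword[OF assms(2,3)] map_collapse_words[OF assms(2,3) chword_words]
    chword_words
  unfolding faithful_map_def meval_gen_shift by blast

lemma collapse_exps_of_nat: "collapse_exps l (\<lambda>q. of_nat (k q)) q = of_nat (collapse_exps l k q)"
  by (cases q) (simp add: collapse_exps_def)

lemma finite_tri: "finite (tri m)"
  by (rule finite_subset[of _ "{0..m} \<times> {0..m}"]) (auto simp: tri_def)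

lemma collapse_exps_linear:
  fixes x :: "nat \<times> nat \<Rightarrow> 'a::comm_semiring_1"
  assumes "1 \<le> l" "l \<le> m" "q \<in> tri m"
  shows "collapse_exps l x q = (\<Sum>q'\<in>tri (Suc m). collapse_exps l (\<lambda>r. if r = q' then 1 else 0) q * x q')"
proof -
  have coord: "(\<Sum>q'\<in>tri (Suc m). (if p = q' then 1 else 0) * x q') = x p" if "p \<in> tri (Suc m)" for p
    using that finite_tri by (simp add: if_distrib if_distribR sum.delta cong: if_cong)
  have mem_tri: "(j, i) \<in> tri m' \<longleftrightarrow> 1 \<le> i \<and> i \<le> j \<and> j \<le> m'" for j i m'
    by (simp add: tri_def)
  obtain j i where "q = (j, i)" "1 \<le> i" "i \<le> j" "j \<le> m"
    using assms(3) by (auto simp: tri_def)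
  then show ?thesis using assms(1,2)
    by (auto simp: collapse_exps_def distrib_right sum.distrib mult.assoc sum_distrib_left[symmetric]
        coord mem_tri)
qed

lemma affine_inj_restr_pullback:
  fixes A :: "'t \<Rightarrow> nat \<times> nat \<Rightarrow> nat \<times> nat \<Rightarrow> real"
    and f :: "'t \<Rightarrow> (nat \<times> nat \<Rightarrow> nat) \<Rightarrow> nat \<times> nat \<Rightarrow> nat"
  assumes aff: "affine_inj_restr m P phi"
    and lin: "\<And>t k q. t \<in> T \<Longrightarrow> q \<in> tri m \<Longrightarrow> real (f t k q) = (\<Sum>q'\<in>tri m'. A t q q' * real (k q'))"
    and inj: "\<And>x y. (\<And>t q. t \<in> T \<Longrightarrow> q \<in> tri m \<Longrightarrow>
                 (\<Sum>q'\<in>tri m'. A t q q' * x q') = (\<Sum>q'\<in>tri m'. A t q q' * y q'))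
               \<Longrightarrow> \<forall>q\<in>tri m'. x q = y q"
  shows "affine_inj_restr m' (T \<times> P) (\<lambda>k (t, p). phi (f t k) p)"
proof -
  obtain c L Z where "Z \<subseteq> P"
    and L_inj: "\<forall>x y. (\<forall>p\<in>P - Z. c p + (\<Sum>q\<in>tri m. L p q * x q) = c p + (\<Sum>q\<in>tri m. L p q * y q))
                  \<longrightarrow> (\<forall>q\<in>tri m. x q = y q)"
    and phi: "\<forall>k. \<forall>p\<in>P. phi k p = (if p \<in> Z then NegInf else Fin (c p + (\<Sum>q\<in>tri m. L p q * real (k q))))"
    using aff unfolding affine_inj_restr_def by (elim exE conjE)
  define L' where "L' = (\<lambda>(t, p) q'. \<Sum>q\<in>tri m. L p q * A t q q')"
  have L': "(\<Sum>q'\<in>tri m'. L' (t, p) q' * x q') = (\<Sum>q\<in>tri m. L p q * (\<Sum>q'\<in>tri m'. A t q q' * x q'))"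
    for t p x
    unfolding L'_def by (simp add: sum_distrib_left sum_distrib_right mult.assoc sum.swap[of _ "tri m'"])
  show ?thesis
    unfolding affine_inj_restr_def
  proof (intro exI[of _ "\<lambda>(t, p). c p"] exI[of _ L'] exI[of _ "T \<times> Z"] conjI allI impI ballI)
    show "T \<times> Z \<subseteq> T \<times> P" using \<open>Z \<subseteq> P\<close> by blast
  next
    fix x y :: "nat \<times> nat \<Rightarrow> real"
    assume eq: "\<forall>tp\<in>T \<times> P - T \<times> Z. (\<lambda>(t, p). c p) tp + (\<Sum>q\<in>tri m'. L' tp q * x q)
                                  = (\<lambda>(t, p). c p) tp + (\<Sum>q\<in>tri m'. L' tp q * y q)"
    have "\<forall>q\<in>tri m'. x q = y q"
    proof (rule inj)
      fix t q assume t: "t \<in> T" and q: "q \<in> tri m"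
      let ?X = "\<lambda>q. \<Sum>q'\<in>tri m'. A t q q' * x q'" and ?Y = "\<lambda>q. \<Sum>q'\<in>tri m'. A t q q' * y q'"
      have "\<forall>p\<in>P - Z. c p + (\<Sum>q\<in>tri m. L p q * ?X q) = c p + (\<Sum>q\<in>tri m. L p q * ?Y q)"
      proof
        fix p assume "p \<in> P - Z"
        then have "(t, p) \<in> T \<times> P - T \<times> Z" using t by blast
        from eq[rule_format, OF this]
        show "c p + (\<Sum>q\<in>tri m. L p q * ?X q) = c p + (\<Sum>q\<in>tri m. L p q * ?Y q)"
          by (simp add: L')
      qed
      then have "\<forall>q\<in>tri m. ?X q = ?Y q" by (rule L_inj[THEN spec, THEN spec, THEN mp])
      then show "?X q = ?Y q" using q by blast
    qed
    moreover fix q assume "q \<in> tri m'"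
    ultimately show "x q = y q" by blast
  next
    fix k and tp :: "'t \<times> _" assume "tp \<in> T \<times> P"
    then obtain t p where tp: "tp = (t, p)" "t \<in> T" "p \<in> P" by blast
    have "(\<Sum>q\<in>tri m. L p q * real (f t k q)) = (\<Sum>q\<in>tri m'. L' (t, p) q * real (k q))"
      unfolding L' by (rule sum.cong) (simp_all add: lin tp(2))
    then show "(\<lambda>k (t, p). phi (f t k) p) k tp = (if tp \<in> T \<times> Z then NegInf
        else Fin ((\<lambda>(t, p). c p) tp + (\<Sum>q\<in>tri m'. L' tp q * real (k q))))"
      using phi tp by simp
  qed
qed

lemma affine_inj_restr_collapses:
  fixes lv :: "'t \<Rightarrow> nat"
  assumes n: "3 \<le> n" and aff: "affine_inj_restr n P phi"
    and lv: "\<And>t. t \<in> T \<Longrightarrow> 1 \<le> lv t \<and> lv t \<le> n" "{1, 2, n} \<subseteq> lv ` T"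
  shows "affine_inj_restr (Suc n) (T \<times> P) (\<lambda>k (t, p). phi (collapse_exps (lv t) k) p)"
proof (rule affine_inj_restr_pullback[OF aff])
  fix t k q assume t: "t \<in> T" and q: "q \<in> tri n"
  have "real (collapse_exps (lv t) k q) = collapse_exps (lv t) (\<lambda>q. real (k q)) q"
    by (rule collapse_exps_of_nat[symmetric])
  also have "\<dots> = (\<Sum>q'\<in>tri (Suc n). collapse_exps (lv t) (\<lambda>r. if r = q' then 1 else 0) q * real (k q'))"
    using lv(1)[OF t] q by (intro collapse_exps_linear) auto
  finally show "real (collapse_exps (lv t) k q)
      = (\<Sum>q'\<in>tri (Suc n). collapse_exps (lv t) (\<lambda>r. if r = q' then 1 else 0) q * real (k q'))" .
next
  fix x y :: "nat \<times> nat \<Rightarrow> real"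
  assume eq: "\<And>t q. t \<in> T \<Longrightarrow> q \<in> tri n \<Longrightarrow>
    (\<Sum>q'\<in>tri (Suc n). collapse_exps (lv t) (\<lambda>r. if r = q' then 1 else 0) q * x q')
    = (\<Sum>q'\<in>tri (Suc n). collapse_exps (lv t) (\<lambda>r. if r = q' then 1 else 0) q * y q')"
  show "\<forall>q\<in>tri (Suc n). x q = y q"
  proof (rule collapse_exps_inj[OF n])
    fix l q assume "l \<in> {1, 2, n}" and q: "q \<in> tri n"
    then obtain t where t: "t \<in> T" "l = lv t" using lv(2) by blast
    have "1 \<le> lv t" "lv t \<le> n" using lv(1)[OF t(1)] by auto
    then show "collapse_exps l x q = collapse_exps l y q"
      using eq[OF t(1) q] collapse_exps_linear[of "lv t" n q x] collapse_exps_linear[of "lv t" n q y] q t(2)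
      by simp
  qed
qed

theorem lemma1p5:
  fixes n :: nat and g :: "nat \<Rightarrow> ('n::finite) tmat"
  assumes "3 \<le> n"
    and "faithful_map n (meval g)"
  shows "faithful_map (n + 1)
           (\<lambda>w. (meval (gen_shift g 1) w, meval (gen_shift g 2) w, meval (gen_shift g n) w))
         \<and> (affine_inj_restr n (UNIV :: ('n \<times> 'n) set)
           (\<lambda>k (r, s). meval g (chword n k) r s)
         \<longrightarrow> affine_inj_restr (n + 1) ({1, 2, 3} \<times> (UNIV :: ('n \<times> 'n) set))
           (\<lambda>k (t, r, s). meval (gen_shift g (if t = (1::nat) then 1 else if t = 2 then 2 else n))
                              (chword (n + 1) k) r s))"
proof -
  have "faithful_map (Suc n)
      (\<lambda>w. (meval (gen_shift g 1) w, meval (gen_shift g 2) w, meval (gen_shift g n) w))"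
    unfolding faithful_map_def
    using assms ch_eq_iff_collapses meval_gen_shift_eq_iff[OF assms(2)] by simp
  moreover
  define lv where "lv t = (if t = 1 then 1 else if t = 2 then 2 else n)" for t :: nat
  have "affine_inj_restr (Suc n) ({1, 2, 3} \<times> UNIV)
      (\<lambda>k (t, r, s). meval (gen_shift g (lv t)) (chword (Suc n) k) r s)"
    if aff: "affine_inj_restr n UNIV (\<lambda>k (r, s). meval g (chword n k) r s)"
  proof -
    have lv: "1 \<le> lv t \<and> lv t \<le> n" for t
      using assms(1) by (simp add: lv_def)
    have "lv ` {1, 2, 3} = {1, 2, n}"
      using assms(1) by (auto simp: lv_def)
    then have "affine_inj_restr (Suc n) ({1, 2, 3} \<times> UNIV)
        (\<lambda>k (t, p). (\<lambda>k (r, s). meval g (chword n k) r s) (collapse_exps (lv t) k) p)"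
      using lv by (intro affine_inj_restr_collapses[OF assms(1) aff, of "{1, 2, 3}" lv]) auto
    moreover have "(\<lambda>k (t, p). (\<lambda>k (r, s). meval g (chword n k) r s) (collapse_exps (lv t) k) p)
        = (\<lambda>k (t, r, s). meval (gen_shift g (lv t)) (chword (Suc n) k) r s)"
      using meval_gen_shift_chword[OF assms(2)] lv by (auto simp: fun_eq_iff)
    ultimately show ?thesis by simp
  qed
  ultimately show ?thesis by (simp add: lv_def)
qed

end
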